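(* Let $n\ge2$ and let $\boldsymbol x^*$ be a pure Nash equilibrium of $\mathcal L(n,S)$. Then all $\boldsymbol x^*$-balanced players obtain the same payoff.
   Context: Network: $(V,E)$ is a finite connected graph with no vertex of degree $2$; each edge $e$ has a length $\lambda(e)>0$. $S$ is the metric measure space obtained by identifying each edge with a segment of length $\lambda(e)$, with length measure $\lambda$ and shortest-path distance $d$. Vertices have their graph degree, and interior points of edges have degree $2$. Location game $\mathcal L(n,S)$: $n$ players each choose a point of $S$. Consumers are distributed according to $\lambda$, and each shops at a closest occupied location. Consumers equidistant from several closest occupied locations are split equally among those locations, and the share of a location is split equally among the players located there. Payoff is the mass of consumers attracted. Nash equilibria are pure. For a profile $\boldsymbol x$ and $w\in S$: if $\operatorname{card}\{i:x_i=w\}=\operatorname{degree}(w)$, the players located at $w$ are called $\boldsymbol x$-balanced and $w$ is called $\boldsymbol x$-saturated. *)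

theory Defs
  imports "HOL-Analysis.Analysis"
begin

text \<open>A network: vertex set V, a simple graph whose edges are stored with one
orientation as pairs (u,w) in E, and edge lengths lam e > 0.
The metric graph S has points: vertices Vx v, and interior edge points Ed e t
with 0 < t < lam e (t = distance from fst e along e).\<close>

datatype 'v pt = Vx 'v | Ed "'v \<times> 'v" real

definition adj :: "('v \<times> 'v) set \<Rightarrow> 'v \<Rightarrow> 'v \<Rightarrow> bool" where
  "adj E u w \<longleftrightarrow> (u, w) \<in> E \<or> (w, u) \<in> E"

definition elen :: "('v \<times> 'v) set \<Rightarrow> ('v \<times> 'v \<Rightarrow> real) \<Rightarrow> 'v \<Rightarrow> 'v \<Rightarrow> real" where
  "elen E lam u w = (if (u, w) \<in> E then lam (u, w) else lam (w, u))"

definition is_walk :: "('v \<times> 'v) set \<Rightarrow> 'v list \<Rightarrow> bool" where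
  "is_walk E ws \<longleftrightarrow> ws \<noteq> [] \<and> (\<forall>i. Suc i < length ws \<longrightarrow> adj E (ws ! i) (ws ! Suc i))"

fun walk_len :: "('v \<times> 'v) set \<Rightarrow> ('v \<times> 'v \<Rightarrow> real) \<Rightarrow> 'v list \<Rightarrow> real" where
  "walk_len E lam (a # b # r) = elen E lam a b + walk_len E lam (b # r)"
| "walk_len E lam _ = 0"

definition vdist :: "('v \<times> 'v) set \<Rightarrow> ('v \<times> 'v \<Rightarrow> real) \<Rightarrow> 'v \<Rightarrow> 'v \<Rightarrow> real" where
  "vdist E lam u w = Inf {walk_len E lam ws | ws. is_walk E ws \<and> hd ws = u \<and> last ws = w}"

definition connected_graph :: "'v set \<Rightarrow> ('v \<times> 'v) set \<Rightarrow> bool" where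
  "connected_graph V E \<longleftrightarrow> (\<forall>u\<in>V. \<forall>w\<in>V. \<exists>ws. is_walk E ws \<and> hd ws = u \<and> last ws = w)"

definition vdegree :: "('v \<times> 'v) set \<Rightarrow> 'v \<Rightarrow> nat" where
  "vdegree E v = card {e \<in> E. fst e = v \<or> snd e = v}"

definition network :: "'v set \<Rightarrow> ('v \<times> 'v) set \<Rightarrow> ('v \<times> 'v \<Rightarrow> real) \<Rightarrow> bool" where
  "network V E lam \<longleftrightarrow> finite V \<and> V \<noteq> {} \<and> E \<subseteq> V \<times> V
     \<and> (\<forall>(u, w) \<in> E. u \<noteq> w \<and> (w, u) \<notin> E)
     \<and> (\<forall>e\<in>E. lam e > 0)
     \<and> connected_graph V E
     \<and> (\<forall>v\<in>V. vdegree E v \<noteq> 2)"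

definition points :: "'v set \<Rightarrow> ('v \<times> 'v) set \<Rightarrow> ('v \<times> 'v \<Rightarrow> real) \<Rightarrow> 'v pt set" where
  "points V E lam = Vx ` V \<union> {Ed e t | e t. e \<in> E \<and> 0 < t \<and> t < lam e}"

fun pdegree :: "('v \<times> 'v) set \<Rightarrow> 'v pt \<Rightarrow> nat" where
  "pdegree E (Vx v) = vdegree E v"
| "pdegree E (Ed e t) = 2"

fun anchors :: "('v \<times> 'v \<Rightarrow> real) \<Rightarrow> 'v pt \<Rightarrow> ('v \<times> real) set" where
  "anchors lam (Vx v) = {(v, 0)}"
| "anchors lam (Ed e t) = {(fst e, t), (snd e, lam e - t)}"

definition sdist :: "('v \<times> 'v) set \<Rightarrow> ('v \<times> 'v \<Rightarrow> real) \<Rightarrow> 'v pt \<Rightarrow> 'v pt \<Rightarrow> real" where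
  "sdist E lam p q =
     (let c = Min {ao + vdist E lam a b + bo | a ao b bo.
                     (a, ao) \<in> anchors lam p \<and> (b, bo) \<in> anchors lam q}
      in (case (p, q) of
            (Ed e t, Ed e' s) \<Rightarrow> (if e = e' then min c \<bar>t - s\<bar> else c)
          | _ \<Rightarrow> c))"

definition edge_pt :: "('v \<times> 'v \<Rightarrow> real) \<Rightarrow> 'v \<times> 'v \<Rightarrow> real \<Rightarrow> 'v pt" where
  "edge_pt lam e t = (if t = 0 then Vx (fst e) else if t = lam e then Vx (snd e) else Ed e t)"

definition share :: "('v \<times> 'v) set \<Rightarrow> ('v \<times> 'v \<Rightarrow> real) \<Rightarrow> nat \<Rightarrow> (nat \<Rightarrow> 'v pt) \<Rightarrow> nat \<Rightarrow> 'v pt \<Rightarrow> real" where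
  "share E lam n x i y =
     (let Occ = x ` {..<n};
          m = Min ((\<lambda>z. sdist E lam y z) ` Occ);
          C = {z \<in> Occ. sdist E lam y z = m}
      in if x i \<in> C then 1 / real (card C) / real (card {j. j < n \<and> x j = x i}) else 0)"

definition payoff :: "('v \<times> 'v) set \<Rightarrow> ('v \<times> 'v \<Rightarrow> real) \<Rightarrow> nat \<Rightarrow> (nat \<Rightarrow> 'v pt) \<Rightarrow> nat \<Rightarrow> real" where
  "payoff E lam n x i = (\<Sum>e\<in>E. integral {0 .. lam e} (\<lambda>t. share E lam n x i (edge_pt lam e t)))"

definition is_profile :: "'v set \<Rightarrow> ('v \<times> 'v) set \<Rightarrow> ('v \<times> 'v \<Rightarrow> real) \<Rightarrow> nat \<Rightarrow> (nat \<Rightarrow> 'v pt) \<Rightarrow> bool" where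
  "is_profile V E lam n x \<longleftrightarrow> (\<forall>i<n. x i \<in> points V E lam)"

definition nash_eq :: "'v set \<Rightarrow> ('v \<times> 'v) set \<Rightarrow> ('v \<times> 'v \<Rightarrow> real) \<Rightarrow> nat \<Rightarrow> (nat \<Rightarrow> 'v pt) \<Rightarrow> bool" where
  "nash_eq V E lam n x \<longleftrightarrow> is_profile V E lam n x \<and>
     (\<forall>i<n. \<forall>y\<in>points V E lam. payoff E lam n (x(i := y)) i \<le> payoff E lam n x i)"

definition balanced :: "('v \<times> 'v) set \<Rightarrow> nat \<Rightarrow> (nat \<Rightarrow> 'v pt) \<Rightarrow> nat \<Rightarrow> bool" where
  "balanced E n x i \<longleftrightarrow> i < n \<and> card {j. j < n \<and> x j = x i} = pdegree E (x i)"

end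

theory Submission
  imports Defs
begin

text \<open>Let player \<open>j\<close> be balanced at \<open>w\<close>, so that \<open>w\<close> hosts \<open>deg w\<close> players, and let \<open>i\<close> be any
  player. For each of the \<open>deg w\<close> directions leaving \<open>w\<close>, player \<open>i\<close> may deviate to the point at
  distance \<open>\<epsilon>\<close> from \<open>w\<close> in that direction (for all but finitely many small \<open>\<epsilon>\<close> this point is
  unoccupied). A consumer for whom \<open>w\<close> is a closest occupied location either lies on one of the
  \<open>\<epsilon>\<close>-segments swept by these deviations, or is strictly closer to one of the deviation points than
  to \<open>w\<close>, and is then captured entirely by the deviating player. As \<open>j\<close> gets at most a \<open>1/deg w\<close>
  share of such consumers, \<open>deg w \<cdot> payoff j\<close> is bounded by the sum of the deviation payoffs plus
  \<open>deg w \<cdot> \<epsilon>\<close>, hence, by the equilibrium property, by \<open>deg w \<cdot> (payoff i + \<epsilon>)\<close>. Letting \<open>\<epsilon> \<rightarrow> 0\<close>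
  and exchanging the roles of two balanced players gives equality.\<close>

section \<open>Walks and vertex distances\<close>

lemma network_facts:
  assumes "network V E lam"
  shows "finite V" "finite E" "E \<subseteq> V \<times> V" "\<And>e. e \<in> E \<Longrightarrow> 0 < lam e"
    "\<And>u w. (u, w) \<in> E \<Longrightarrow> u \<noteq> w \<and> (w, u) \<notin> E" "connected_graph V E"
proof -
  show "finite V" "E \<subseteq> V \<times> V" "\<And>e. e \<in> E \<Longrightarrow> 0 < lam e" "connected_graph V E"
    using assms unfolding network_def by auto
  then show "finite E"
    by (meson finite_SigmaI rev_finite_subset)
  show "\<And>u w. (u, w) \<in> E \<Longrightarrow> u \<noteq> w \<and> (w, u) \<notin> E"
    using assms unfolding network_def by fast
qed

lemma walk_len_snoc:
  "ws \<noteq> [] \<Longrightarrow> walk_len E lam (ws @ [b]) = walk_len E lam ws + elen E lam (last ws) b"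
  by (induction E lam ws rule: walk_len.induct) auto

lemma elen_nonneg: "(\<And>e. e \<in> E \<Longrightarrow> 0 \<le> lam e) \<Longrightarrow> adj E u w \<Longrightarrow> 0 \<le> elen E lam u w"
  unfolding adj_def elen_def by auto

lemma walk_len_nonneg:
  assumes "\<And>e. e \<in> E \<Longrightarrow> 0 \<le> lam e" and "is_walk E ws"
  shows "0 \<le> walk_len E lam ws"
  using assms
proof (induction E lam ws rule: walk_len.induct)
  case (1 E lam a b r)
  then have "adj E a b" and "is_walk E (b # r)"
    unfolding is_walk_def by (auto dest: spec[of _ 0] spec[of _ "Suc _"])
  with 1 show ?case
    using elen_nonneg[of E lam a b] by simp
qed auto

lemma is_walk_snocD:
  assumes "is_walk E (ws @ [b])" and "ws \<noteq> []"
  shows "is_walk E ws" and "adj E (last ws) b"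
proof -
  have adj: "adj E ((ws @ [b]) ! k) ((ws @ [b]) ! Suc k)" if "Suc k < Suc (length ws)" for k
    using assms(1) that unfolding is_walk_def by auto
  show "is_walk E ws"
    unfolding is_walk_def
  proof (intro conjI allI impI)
    fix k assume "Suc k < length ws"
    with adj[of k] show "adj E (ws ! k) (ws ! Suc k)"
      by (simp add: nth_append)
  qed (fact assms(2))
  show "adj E (last ws) b"
    using adj[of "length ws - 1"] assms(2) by (simp add: nth_append last_conv_nth)
qed

lemma vdist_le_walk_len:
  assumes "\<And>e. e \<in> E \<Longrightarrow> 0 \<le> lam e" and "is_walk E ws"
  shows "vdist E lam (hd ws) (last ws) \<le> walk_len E lam ws"
  unfolding vdist_def
proof (rule cInf_lower)
  show "bdd_below {walk_len E lam ws' |ws'. is_walk E ws' \<and> hd ws' = hd ws \<and> last ws' = last ws}"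
    using walk_len_nonneg[OF assms(1)] by (intro bdd_belowI[of _ 0]) auto
qed (use assms in auto)

lemma le_vdist:
  assumes "connected_graph V E" and "a \<in> V" and "b \<in> V"
    and "\<And>ws. is_walk E ws \<Longrightarrow> hd ws = a \<Longrightarrow> last ws = b \<Longrightarrow> r \<le> walk_len E lam ws"
  shows "r \<le> vdist E lam a b"
  unfolding vdist_def
proof (rule cInf_greatest)
  show "{walk_len E lam ws |ws. is_walk E ws \<and> hd ws = a \<and> last ws = b} \<noteq> {}"
    using assms(1-3) unfolding connected_graph_def by blast
qed (use assms(4) in blast)

lemma vdist_nonneg:
  assumes "network V E lam" and "a \<in> V" and "b \<in> V"
  shows "0 \<le> vdist E lam a b"
  using network_facts[OF assms(1)] assms(2,3)
  by (intro le_vdist[of V E] walk_len_nonneg) (auto simp: less_imp_le)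

lemma walk_last_edge_bound:
  assumes "\<And>e. e \<in> E \<Longrightarrow> 0 \<le> lam e" and "is_walk E ws" and "hd ws = a" and "last ws = u"
    and "a \<noteq> u"
  shows "\<exists>v. adj E v u \<and> vdist E lam a v + elen E lam v u \<le> walk_len E lam ws"
proof -
  define ws' where "ws' = butlast ws"
  have "ws \<noteq> []"
    using assms(2) unfolding is_walk_def by blast
  then have ws_eq: "ws = ws' @ [u]"
    unfolding ws'_def using assms(4) by (metis append_butlast_last_id)
  moreover have "ws' \<noteq> []"
    using ws_eq assms(3,5) by auto
  ultimately have ws': "ws = ws' @ [u]" "ws' \<noteq> []" .
  note w' = is_walk_snocD[OF assms(2)[unfolded ws'(1)] ws'(2)]
  have "vdist E lam a (last ws') \<le> walk_len E lam ws'"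
    using vdist_le_walk_len[OF assms(1) w'(1)] assms(3) ws' by simp
  with w'(2) show ?thesis
    unfolding ws'(1) walk_len_snoc[OF ws'(2)] by (intro exI[of _ "last ws'"]) simp
qed

lemma vdist_last_edge:
  assumes net: "network V E lam" and "a \<in> V" and "u \<in> V" and "a \<noteq> u"
  shows "\<exists>v. adj E v u \<and> vdist E lam a v + elen E lam v u \<le> vdist E lam a u"
proof -
  note nf = network_facts[OF net]
  define N where "N = {v. adj E v u}"
  define g where "g v = vdist E lam a v + elen E lam v u" for v
  have "N \<subseteq> fst ` E \<union> snd ` E"
    unfolding N_def adj_def by force
  then have finN: "finite N"
    by (rule finite_subset) (simp add: nf(2))
  have walk_bound: "\<exists>v\<in>N. g v \<le> walk_len E lam ws"
    if "is_walk E ws" "hd ws = a" "last ws = u" for ws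
    using walk_last_edge_bound[OF _ that \<open>a \<noteq> u\<close>] nf(4) unfolding N_def g_def
    by (simp add: less_imp_le)
  obtain ws0 where "is_walk E ws0" "hd ws0 = a" "last ws0 = u"
    using nf(6) assms(2,3) unfolding connected_graph_def by blast
  then have "N \<noteq> {}"
    using walk_bound by blast
  then have "Min (g ` N) \<in> g ` N"
    using finN by (intro Min_in) auto
  then obtain v where v: "v \<in> N" "g v = Min (g ` N)"
    by auto
  have "Min (g ` N) \<le> vdist E lam a u"
  proof (rule le_vdist[OF nf(6) assms(2,3)])
    fix ws assume "is_walk E ws" "hd ws = a" "last ws = u"
    then obtain v' where "v' \<in> N" "g v' \<le> walk_len E lam ws"
      using walk_bound by blast
    then show "Min (g ` N) \<le> walk_len E lam ws"
      using finN by (meson Min_le finite_imageI imageI order.trans)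
  qed
  with v show ?thesis
    unfolding N_def g_def by auto
qed

section \<open>The distance on the metric graph\<close>

lemma finite_anchors: "finite (anchors lam p)"
  by (cases p) auto

lemma sdist_candidates_eq:
  "{ao + vdist E lam a b + bo | a ao b bo. (a, ao) \<in> anchors lam p \<and> (b, bo) \<in> anchors lam q}
   = (\<lambda>((a, ao), (b, bo)). ao + vdist E lam a b + bo) ` (anchors lam p \<times> anchors lam q)"
  by (auto simp: image_iff) force+

lemma finite_sdist_candidates:
  "finite {ao + vdist E lam a b + bo | a ao b bo. (a, ao) \<in> anchors lam p \<and> (b, bo) \<in> anchors lam q}"
  unfolding sdist_candidates_eq by (simp add: finite_anchors)

lemma sdist_le_anchors:
  assumes "(a, ao) \<in> anchors lam p" and "(b, bo) \<in> anchors lam q"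
  shows "sdist E lam p q \<le> ao + vdist E lam a b + bo"
proof -
  have "Min {ao + vdist E lam a b + bo | a ao b bo. (a, ao) \<in> anchors lam p \<and> (b, bo) \<in> anchors lam q}
        \<le> ao + vdist E lam a b + bo"
    using assms by (intro Min_le[OF finite_sdist_candidates]) blast
  then show ?thesis
    unfolding sdist_def Let_def by (auto split: pt.splits)
qed

lemma sdist_same_edge: "sdist E lam (Ed e t) (Ed e s) \<le> \<bar>t - s\<bar>"
  unfolding sdist_def Let_def by auto

lemma sdist_cases:
  obtains a ao b bo where "(a, ao) \<in> anchors lam p" "(b, bo) \<in> anchors lam q"
      "sdist E lam p q = ao + vdist E lam a b + bo"
  | e t s where "p = Ed e t" "q = Ed e s" "sdist E lam p q = \<bar>t - s\<bar>"
proof -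
  let ?A = "{ao + vdist E lam a b + bo | a ao b bo. (a, ao) \<in> anchors lam p \<and> (b, bo) \<in> anchors lam q}"
  have "?A \<noteq> {}"
    by (cases p; cases q) auto
  then have "Min ?A \<in> ?A"
    by (intro Min_in[OF finite_sdist_candidates])
  moreover have "sdist E lam p q = Min ?A \<or> (\<exists>e t s. p = Ed e t \<and> q = Ed e s \<and> sdist E lam p q = \<bar>t - s\<bar>)"
    unfolding sdist_def Let_def by (auto split: pt.splits simp: min_def)
  ultimately show ?thesis
  proof (elim disjE exE conjE)
    assume "Min ?A \<in> ?A" and "sdist E lam p q = Min ?A"
    then show ?thesis
      using that(1) by auto
  qed (use that(2) in blast)
qed

text \<open>Exposes the dependence on \<open>t\<close> as a minimum over a fixed finite index set, for measurability.\<close>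

lemma sdist_Ed_left:
  "sdist E lam (Ed e t) z =
    (let c = Min ((\<lambda>(k, b, bo). (if k then t + vdist E lam (fst e) b else lam e - t + vdist E lam (snd e) b) + bo)
                   ` (UNIV \<times> anchors lam z))
     in case z of Ed e' s \<Rightarrow> if e = e' then min c \<bar>t - s\<bar> else c | _ \<Rightarrow> c)"
proof -
  have "(\<lambda>((a, ao), (b, bo)). ao + vdist E lam a b + bo) ` (anchors lam (Ed e t) \<times> anchors lam z)
     = (\<lambda>(k, b, bo). (if k then t + vdist E lam (fst e) b else lam e - t + vdist E lam (snd e) b) + bo)
         ` (UNIV \<times> anchors lam z)"
    (is "?f ` _ = ?g ` _")
  proof (intro equalityI subsetI)
    fix r assume "r \<in> ?f ` (anchors lam (Ed e t) \<times> anchors lam z)"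
    then obtain a ao b bo where r: "(a, ao) \<in> anchors lam (Ed e t)" "(b, bo) \<in> anchors lam z"
      "r = ao + vdist E lam a b + bo"
      by auto
    then consider "(a, ao) = (fst e, t)" | "(a, ao) = (snd e, lam e - t)"
      by auto
    then show "r \<in> ?g ` (UNIV \<times> anchors lam z)"
      by cases (use r in \<open>force intro: rev_image_eqI[of "(True, b, bo)"] rev_image_eqI[of "(False, b, bo)"]\<close>)+
  next
    fix r assume "r \<in> ?g ` (UNIV \<times> anchors lam z)"
    then obtain k b bo where r: "(b, bo) \<in> anchors lam z" "r = ?g (k, b, bo)"
      by auto
    then show "r \<in> ?f ` (anchors lam (Ed e t) \<times> anchors lam z)"
      by (cases k) (force intro: rev_image_eqI[of "((fst e, t), b, bo)"] rev_image_eqI[of "((snd e, lam e - t), b, bo)"])+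
  qed
  then show ?thesis
    unfolding sdist_def sdist_candidates_eq by (cases z) auto
qed

lemma borel_measurable_sdist_edge_pt:
  "(\<lambda>t. sdist E lam (edge_pt lam e t) z) \<in> borel_measurable borel"
proof -
  have "(\<lambda>t. sdist E lam (Ed e t) z) \<in> borel_measurable borel"
    unfolding sdist_Ed_left Let_def
    by (cases z) (auto intro!: borel_measurable_Min simp: finite_anchors split: prod.splits)
  moreover have "(\<lambda>t. sdist E lam (edge_pt lam e t) z) =
      (\<lambda>t. if t = 0 then sdist E lam (Vx (fst e)) z else if t = lam e then sdist E lam (Vx (snd e)) z
           else sdist E lam (Ed e t) z)"
    by (auto simp: edge_pt_def)
  ultimately show ?thesis
    by simp
qed

section \<open>Shares and payoffs\<close>

definition closest_occupied :: "('v \<times> 'v) set \<Rightarrow> ('v \<times> 'v \<Rightarrow> real) \<Rightarrow> nat \<Rightarrow> (nat \<Rightarrow> 'v pt) \<Rightarrow> 'v pt \<Rightarrow> 'v pt \<Rightarrow> bool"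
  where "closest_occupied E lam n x w y \<longleftrightarrow> (\<forall>z\<in>x ` {..<n}. sdist E lam y w \<le> sdist E lam y z)"

lemma integrable_on_bounded_measurable:
  fixes f :: "real \<Rightarrow> real"
  assumes "f \<in> borel_measurable borel" and "\<And>t. \<bar>f t\<bar> \<le> B"
  shows "f integrable_on {a..b}"
proof (rule measurable_bounded_by_integrable_imp_integrable_real[where g = "\<lambda>_. B"])
  show "f \<in> borel_measurable (lebesgue_on {a..b})"
    using assms(1) by (simp add: measurable_completion measurable_restrict_space1)
qed (use assms(2) in auto)

lemma share_eq_indicator_sum:
  assumes "k < n"
  shows "share E lam n x k y =
    (if sdist E lam y (x k) = Min ((\<lambda>z. sdist E lam y z) ` x ` {..<n}) then 1 else 0)
      / (\<Sum>z\<in>x ` {..<n}. if sdist E lam y z = Min ((\<lambda>z. sdist E lam y z) ` x ` {..<n}) then 1 else 0)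
      / real (card {j. j < n \<and> x j = x k})"
proof -
  let ?m = "Min ((\<lambda>z. sdist E lam y z) ` x ` {..<n})"
  have "{z \<in> x ` {..<n}. sdist E lam y z = ?m} = x ` {..<n} \<inter> {z. sdist E lam y z = ?m}"
    by blast
  then have "real (card {z \<in> x ` {..<n}. sdist E lam y z = ?m}) = (\<Sum>z\<in>x ` {..<n}. if sdist E lam y z = ?m then 1 else 0)"
    by (simp add: sum.If_cases)
  with assms show ?thesis
    unfolding share_def Let_def by auto
qed

lemma borel_measurable_share_edge_pt:
  "k < n \<Longrightarrow> (\<lambda>t. share E lam n x k (edge_pt lam e t)) \<in> borel_measurable borel"
  unfolding share_eq_indicator_sum using borel_measurable_sdist_edge_pt[measurable] by measurable

lemma share_nonneg: "0 \<le> share E lam n x k y"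
  unfolding share_def Let_def by auto

lemma share_le_1: "share E lam n x k y \<le> 1"
proof -
  have "1 / real c / real d \<le> 1" for c d :: nat
    by (cases "c = 0"; cases "d = 0") (auto simp: divide_le_eq intro: order.trans[OF _ mult_right_mono[of 1]])
  then show ?thesis
    unfolding share_def Let_def by auto
qed

lemma integrable_share_edge_pt:
  "k < n \<Longrightarrow> (\<lambda>t. share E lam n x k (edge_pt lam e t)) integrable_on {a..b}"
  by (rule integrable_on_bounded_measurable[OF borel_measurable_share_edge_pt, where B = 1])
    (use share_nonneg share_le_1 in \<open>auto simp: abs_le_iff intro: order.trans[OF _ share_nonneg]\<close>)

lemma integrable_closest_occupied_edge_pt:
  "(\<lambda>t. if closest_occupied E lam n x w (edge_pt lam e t) then 1 else 0 :: real) integrable_on {a..b}"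
  by (rule integrable_on_bounded_measurable[where B = 1])
    (auto simp: closest_occupied_def intro: borel_measurable_sdist_edge_pt[measurable])

lemma share_le_closest_occupied:
  assumes "j < n"
  shows "real (card {k. k < n \<and> x k = x j}) * share E lam n x j y
           \<le> (if closest_occupied E lam n x (x j) y then 1 else 0)"
proof -
  let ?C = "{z \<in> x ` {..<n}. sdist E lam y z = Min ((\<lambda>z. sdist E lam y z) ` x ` {..<n})}"
  have "0 < card {k. k < n \<and> x k = x j}"
    using assms by (auto simp: card_gt_0_iff)
  moreover have "0 < card ?C" if "x j \<in> ?C"
    using that by (auto simp: card_gt_0_iff)
  moreover have "closest_occupied E lam n x (x j) y" if "x j \<in> ?C"
    using that unfolding closest_occupied_def by auto
  ultimately show ?thesis
    unfolding share_def Let_def by (auto simp: field_simps)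
qed

lemma share_deviation_eq_1:
  assumes "i < n" and "q \<notin> x ` {..<n}" and "closest_occupied E lam n x w y"
    and "sdist E lam y q < sdist E lam y w"
  shows "share E lam n (x(i := q)) i y = 1"
proof -
  let ?O = "(x(i := q)) ` {..<n}"
  have qO: "q \<in> ?O"
    using assms(1) by (auto intro: rev_image_eqI[of i])
  have closer: "sdist E lam y q < sdist E lam y z" if "z \<in> ?O" "z \<noteq> q" for z
  proof -
    have "z \<in> x ` {..<n}"
      using that by (auto split: if_splits)
    with assms(3) have "sdist E lam y w \<le> sdist E lam y z"
      unfolding closest_occupied_def by blast
    with assms(4) show ?thesis
      by linarith
  qed
  have "Min ((\<lambda>z. sdist E lam y z) ` ?O) = sdist E lam y q"
    by (rule Min_eqI) (use qO closer assms(2) in \<open>auto intro: less_imp_le\<close>)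
  moreover have "{z \<in> ?O. sdist E lam y z = sdist E lam y q} = {q}"
    using qO closer by fastforce
  moreover have "{j. j < n \<and> (x(i := q)) j = (x(i := q)) i} = {i}"
    using assms(1,2) by auto
  ultimately show ?thesis
    unfolding share_def Let_def using qO by simp
qed

lemma integral_share_le_cover:
  assumes "j < n" and "S integrable_on {0..L}" and "\<And>t. 0 \<le> S t" and "finite Z"
    and "\<And>t. t \<in> {0..L} - Z \<Longrightarrow> closest_occupied E lam n x (x j) (edge_pt lam e t) \<Longrightarrow> 1 \<le> S t"
  shows "real (card {k. k < n \<and> x k = x j}) * integral {0..L} (\<lambda>t. share E lam n x j (edge_pt lam e t))
           \<le> integral {0..L} S"
proof -
  let ?R = "\<lambda>t. if closest_occupied E lam n x (x j) (edge_pt lam e t) then 1 else 0 :: real"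
  let ?R' = "\<lambda>t. if t \<in> Z then 0 else ?R t"
  have "real (card {k. k < n \<and> x k = x j}) * integral {0..L} (\<lambda>t. share E lam n x j (edge_pt lam e t))
        = integral {0..L} (\<lambda>t. real (card {k. k < n \<and> x k = x j}) * share E lam n x j (edge_pt lam e t))"
    by simp
  also have "\<dots> \<le> integral {0..L} ?R"
    using assms(1)
    by (intro integral_le integrable_share_edge_pt integrable_closest_occupied_edge_pt
        share_le_closest_occupied integrable_on_mult_right)
  also have "\<dots> = integral {0..L} ?R'"
    by (rule integral_spike[where S = Z]) (use assms(4) in \<open>auto intro: negligible_finite\<close>)
  also have "\<dots> \<le> integral {0..L} S"
  proof (rule integral_le)
    show "?R' integrable_on {0..L}"
      by (rule integrable_spike_finite[OF assms(4), where f = ?R])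
        (auto intro: integrable_closest_occupied_edge_pt)
    show "?R' t \<le> S t" if "t \<in> {0..L}" for t
      using assms(3,5)[of t] that by auto
  qed (fact assms(2))
  finally show ?thesis .
qed

lemma payoff_le_mean_deviation:
  fixes D :: "'d set" and q :: "'d \<Rightarrow> 'v pt" and h :: "'d \<Rightarrow> 'v \<times> 'v \<Rightarrow> real \<Rightarrow> real"
  assumes "finite E" and "j < n" and "i < n" and "finite D"
    and h_int: "\<And>d e. d \<in> D \<Longrightarrow> e \<in> E \<Longrightarrow> h d e integrable_on {0..lam e}"
    and h_nonneg: "\<And>d e t. d \<in> D \<Longrightarrow> 0 \<le> h d e t"
    and cover: "\<And>e. e \<in> E \<Longrightarrow> \<exists>Z. finite Z \<and> (\<forall>t\<in>{0..lam e} - Z.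
        closest_occupied E lam n x (x j) (edge_pt lam e t) \<longrightarrow>
        1 \<le> (\<Sum>d\<in>D. share E lam n (x(i := q d)) i (edge_pt lam e t) + h d e t))"
  shows "real (card {k. k < n \<and> x k = x j}) * payoff E lam n x j
           \<le> (\<Sum>d\<in>D. payoff E lam n (x(i := q d)) i + (\<Sum>e\<in>E. integral {0..lam e} (h d e)))"
proof -
  let ?dev = "\<lambda>d e t. share E lam n (x(i := q d)) i (edge_pt lam e t)"
  let ?S = "\<lambda>e t. \<Sum>d\<in>D. ?dev d e t + h d e t"
  have S_int: "?S e integrable_on {0..lam e}" if "e \<in> E" for e
    using assms(3,4) that by (intro integrable_sum integrable_add integrable_share_edge_pt h_int)
  have S_integral: "integral {0..lam e} (?S e)
      = (\<Sum>d\<in>D. integral {0..lam e} (?dev d e) + integral {0..lam e} (h d e))" if "e \<in> E" for e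
    using assms(3,4) that
    by (subst integral_sum) (auto intro!: sum.cong integral_add integrable_share_edge_pt integrable_add h_int)
  have "real (card {k. k < n \<and> x k = x j}) * payoff E lam n x j
        = (\<Sum>e\<in>E. real (card {k. k < n \<and> x k = x j}) * integral {0..lam e} (\<lambda>t. share E lam n x j (edge_pt lam e t)))"
    unfolding payoff_def by (simp add: sum_distrib_left)
  also have "\<dots> \<le> (\<Sum>e\<in>E. integral {0..lam e} (?S e))"
  proof (rule sum_mono)
    fix e assume "e \<in> E"
    then obtain Z where "finite Z" and "\<forall>t\<in>{0..lam e} - Z.
        closest_occupied E lam n x (x j) (edge_pt lam e t) \<longrightarrow> 1 \<le> ?S e t"
      using cover by blast
    then show "real (card {k. k < n \<and> x k = x j}) * integral {0..lam e} (\<lambda>t. share E lam n x j (edge_pt lam e t))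
               \<le> integral {0..lam e} (?S e)"
      using \<open>e \<in> E\<close> assms(2) S_int
      by (intro integral_share_le_cover) (auto intro!: sum_nonneg add_nonneg_nonneg share_nonneg h_nonneg)
  qed
  also have "\<dots> = (\<Sum>e\<in>E. \<Sum>d\<in>D. integral {0..lam e} (?dev d e) + integral {0..lam e} (h d e))"
    using S_integral by (rule sum.cong[OF refl])
  also have "\<dots> = (\<Sum>d\<in>D. payoff E lam n (x(i := q d)) i + (\<Sum>e\<in>E. integral {0..lam e} (h d e)))"
    unfolding payoff_def by (simp add: sum.swap[of _ E] sum.distrib)
  finally show ?thesis .
qed

section \<open>Deviations in all directions at a point\<close>

text \<open>A direction \<open>(e, t\<^sub>0, \<sigma>)\<close> leaves the point at position \<open>t\<^sub>0\<close> of the edge \<open>e\<close>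
  towards \<open>snd e\<close> if \<open>\<sigma>\<close> and towards \<open>fst e\<close> otherwise.\<close>

fun dir_point :: "('v \<times> 'v) \<times> real \<times> bool \<Rightarrow> real \<Rightarrow> 'v pt" where
  "dir_point (e, t\<^sub>0, True) \<epsilon> = Ed e (t\<^sub>0 + \<epsilon>)"
| "dir_point (e, t\<^sub>0, False) \<epsilon> = Ed e (t\<^sub>0 - \<epsilon>)"

fun dir_segment :: "('v \<times> 'v) \<times> real \<times> bool \<Rightarrow> real \<Rightarrow> real set" where
  "dir_segment (e, t\<^sub>0, True) \<epsilon> = {t\<^sub>0..t\<^sub>0 + \<epsilon>}"
| "dir_segment (e, t\<^sub>0, False) \<epsilon> = {t\<^sub>0 - \<epsilon>..t\<^sub>0}"

fun dir_room :: "('v \<times> 'v \<Rightarrow> real) \<Rightarrow> ('v \<times> 'v) \<times> real \<times> bool \<Rightarrow> real" where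
  "dir_room lam (e, t\<^sub>0, True) = lam e - t\<^sub>0"
| "dir_room lam (e, t\<^sub>0, False) = t\<^sub>0"

fun dir_target :: "('v \<times> 'v) \<times> real \<times> bool \<Rightarrow> 'v" where
  "dir_target (e, t\<^sub>0, True) = snd e"
| "dir_target (e, t\<^sub>0, False) = fst e"

fun directions :: "('v \<times> 'v) set \<Rightarrow> ('v \<times> 'v \<Rightarrow> real) \<Rightarrow> 'v pt \<Rightarrow> (('v \<times> 'v) \<times> real \<times> bool) set" where
  "directions E lam (Vx u) =
     (\<lambda>e. (e, 0, True)) ` {e \<in> E. fst e = u} \<union> (\<lambda>e. (e, lam e, False)) ` {e \<in> E. snd e = u}"
| "directions E lam (Ed e s) = {(e, s, True), (e, s, False)}"

lemma card_directions:
  assumes "network V E lam"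
  shows "card (directions E lam w) = pdegree E w"
proof (cases w)
  case (Vx u)
  let ?A = "{e \<in> E. fst e = u}" and ?B = "{e \<in> E. snd e = u}"
  have fin: "finite ?A" "finite ?B"
    using network_facts(2)[OF assms] by simp_all
  have "?A \<inter> ?B = {}"
    using network_facts(5)[OF assms, of u u] by auto
  then have "card {e \<in> E. fst e = u \<or> snd e = u} = card ?A + card ?B"
    using fin by (simp add: Collect_disj_eq[symmetric] card_Un_disjoint[symmetric] conj_disj_distribL)
  moreover have "card (directions E lam (Vx u)) = card ?A + card ?B"
    unfolding directions.simps using fin by (subst card_Un_disjoint) (auto simp: card_image inj_on_def)
  ultimately show ?thesis
    using Vx by (simp add: vdegree_def)
qed simp

lemma directions_dir_room:
  assumes "network V E lam" and "w \<in> points V E lam" and "d \<in> directions E lam w"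
  shows "fst d \<in> E" and "0 < dir_room lam d" and "0 \<le> fst (snd d)" and "fst (snd d) \<le> lam (fst d)"
  using assms(2,3) network_facts(4)[OF assms(1)]
  by (cases w; force simp: points_def)+

lemma dir_point_mem_points:
  assumes "network V E lam" and "w \<in> points V E lam" and "d \<in> directions E lam w"
    and "0 < \<epsilon>" and "\<epsilon> < dir_room lam d"
  shows "dir_point d \<epsilon> \<in> points V E lam"
  using directions_dir_room[OF assms(1-3)] assms(4,5)
  by (cases d rule: dir_target.cases) (auto simp: points_def)

lemma dir_segment_indicator:
  assumes "network V E lam" and "w \<in> points V E lam" and "d \<in> directions E lam w"
    and "0 < \<epsilon>" and "\<epsilon> < dir_room lam d"
  shows "(\<lambda>t. if e = fst d \<and> t \<in> dir_segment d \<epsilon> then 1 else 0 :: real) integrable_on {0..lam e}"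
    and "(\<Sum>e\<in>E. integral {0..lam e} (\<lambda>t. if e = fst d \<and> t \<in> dir_segment d \<epsilon> then 1 else 0 :: real)) = \<epsilon>"
proof -
  define a where "a = (if snd (snd d) then fst (snd d) else fst (snd d) - \<epsilon>)"
  have "dir_segment d \<epsilon> = {a..a + \<epsilon>}" and "{a..a + \<epsilon>} \<subseteq> {0..lam (fst d)}"
    using directions_dir_room[OF assms(1-3)] assms(4,5) unfolding a_def
    by (cases d rule: dir_target.cases; auto)+
  then have "dir_segment d \<epsilon> \<inter> {0..lam (fst d)} = {a..a + \<epsilon>}"
    by auto
  then have int: "(\<lambda>t. if t \<in> dir_segment d \<epsilon> then 1 else 0 :: real) integrable_on {0..lam (fst d)}"
    and val: "integral {0..lam (fst d)} (\<lambda>t. if t \<in> dir_segment d \<epsilon> then 1 else 0 :: real) = \<epsilon>"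
    using assms(4) integrable_restrict_Int[where S = "dir_segment d \<epsilon>" and f = "\<lambda>_. 1::real"]
      integral_restrict_Int[where S = "dir_segment d \<epsilon>" and f = "\<lambda>_. 1::real"]
    by (simp_all add: integrable_const_ivl)
  show "(\<lambda>t. if e = fst d \<and> t \<in> dir_segment d \<epsilon> then 1 else 0 :: real) integrable_on {0..lam e}"
    using int by (cases "e = fst d") (simp_all add: integrable_0)
  have "(\<Sum>e\<in>E. integral {0..lam e} (\<lambda>t. if e = fst d \<and> t \<in> dir_segment d \<epsilon> then 1 else 0 :: real))
        = (\<Sum>e\<in>E. if e = fst d then \<epsilon> else 0)"
    using val by (intro sum.cong) auto
  also have "\<dots> = \<epsilon>"
    using directions_dir_room(1)[OF assms(1-3)] network_facts(2)[OF assms(1)] by simp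
  finally show "(\<Sum>e\<in>E. integral {0..lam e} (\<lambda>t. if e = fst d \<and> t \<in> dir_segment d \<epsilon> then 1 else 0 :: real)) = \<epsilon>" .
qed

lemma dir_point_anchor: "(dir_target d, dir_room lam d - \<epsilon>) \<in> anchors lam (dir_point d \<epsilon>)"
  by (cases d rule: dir_target.cases) auto

lemma finite_dir_point_eq: "finite {\<epsilon>. dir_point d \<epsilon> = z}"
proof -
  have "inj (dir_point d)"
    by (cases d rule: dir_target.cases) (auto intro: injI)
  then show ?thesis
    using finite_vimageI[of "{z}" "dir_point d"] by (simp add: vimage_def)
qed

lemma sdist_dir_point_same_edge:
  "sdist E lam (Ed e t) (dir_point (e, t\<^sub>0, \<sigma>) \<epsilon>) \<le> \<bar>t - (if \<sigma> then t\<^sub>0 + \<epsilon> else t\<^sub>0 - \<epsilon>)\<bar>"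
  by (cases \<sigma>) (simp_all add: sdist_same_edge)

lemma vertex_direction_closer:
  assumes net: "network V E lam" and "u \<in> V" and "e \<in> E" and "0 < t" and "t < lam e" and "0 < \<epsilon>"
  shows "\<exists>d\<in>directions E lam (Vx u). (fst d = e \<and> t \<in> dir_segment d \<epsilon>)
           \<or> sdist E lam (Ed e t) (dir_point d \<epsilon>) < sdist E lam (Ed e t) (Vx u)"
proof -
  note nf = network_facts[OF net]
  obtain a ao where anc: "(a, ao) \<in> anchors lam (Ed e t)" and dist: "sdist E lam (Ed e t) (Vx u) = ao + vdist E lam a u"
    by (cases rule: sdist_cases[of lam "Ed e t" "Vx u" E]) auto
  have "fst e \<in> V" "snd e \<in> V" "fst e \<noteq> snd e"
    using assms(3) nf(3) nf(5)[of "fst e" "snd e"] by auto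
  then have "a \<in> V"
    using anc by auto
  show ?thesis
  proof (cases "a = u")
    case True
    define d where "d = (if fst e = u then (e, 0, True) else (e, lam e, False))"
    have "d \<in> directions E lam (Vx u)" and "fst d = e"
      using anc True assms(3) \<open>fst e \<noteq> snd e\<close> unfolding d_def by auto
    moreover have "sdist E lam (Ed e t) (dir_point d \<epsilon>) < sdist E lam (Ed e t) (Vx u)" if "t \<notin> dir_segment d \<epsilon>"
    proof -
      have "sdist E lam (Ed e t) (dir_point d \<epsilon>) < ao"
        using anc True that assms(4-6) \<open>fst e \<noteq> snd e\<close> sdist_dir_point_same_edge[of E lam e t 0 True \<epsilon>]
          sdist_dir_point_same_edge[of E lam e t "lam e" False \<epsilon>]
        unfolding d_def by (auto split: if_splits)
      then show ?thesis
        using dist vdist_nonneg[OF net assms(2,2)] True by simp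
    qed
    ultimately show ?thesis
      by blast
  next
    case False
    obtain v where v: "adj E v u" "vdist E lam a v + elen E lam v u \<le> vdist E lam a u"
      using vdist_last_edge[OF net \<open>a \<in> V\<close> assms(2) False] by blast
    define d where "d = (if (u, v) \<in> E then ((u, v), 0, True) else ((v, u), lam (v, u), False))"
    have "d \<in> directions E lam (Vx u)"
      using v(1) unfolding d_def adj_def by auto
    moreover have "dir_target d = v" and "dir_room lam d = elen E lam v u"
      using v(1) nf(5)[of u v] unfolding d_def adj_def elen_def by auto
    then have "sdist E lam (Ed e t) (dir_point d \<epsilon>) \<le> ao + vdist E lam a v + (elen E lam v u - \<epsilon>)"
      using sdist_le_anchors[OF anc dir_point_anchor] by metis
    then have "sdist E lam (Ed e t) (dir_point d \<epsilon>) < sdist E lam (Ed e t) (Vx u)"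
      using dist v(2) assms(6) by linarith
    ultimately show ?thesis
      by blast
  qed
qed

lemma edge_direction_closer:
  assumes "Ed e t \<noteq> Ed f s" and "0 < \<epsilon>"
  shows "\<exists>d\<in>directions E lam (Ed f s). (fst d = e \<and> t \<in> dir_segment d \<epsilon>)
           \<or> sdist E lam (Ed e t) (dir_point d \<epsilon>) < sdist E lam (Ed e t) (Ed f s)"
proof (cases rule: sdist_cases[of lam "Ed e t" "Ed f s" E])
  case (1 a ao b bo)
  define d where "d = (if (b, bo) = (fst f, s) then (f, s, False) else (f, s, True))"
  have "dir_target d = b" and "dir_room lam d = bo"
    using 1(2) unfolding d_def by auto
  then have "sdist E lam (Ed e t) (dir_point d \<epsilon>) \<le> ao + vdist E lam a b + (bo - \<epsilon>)"
    using sdist_le_anchors[OF 1(1) dir_point_anchor] by metis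
  then have "sdist E lam (Ed e t) (dir_point d \<epsilon>) < sdist E lam (Ed e t) (Ed f s)"
    using 1(3) assms(2) by linarith
  moreover have "d \<in> directions E lam (Ed f s)"
    unfolding d_def by simp
  ultimately show ?thesis
    by blast
next
  case (2 e' t' s')
  then have "e = f" and "t \<noteq> s" and dist: "sdist E lam (Ed e t) (Ed f s) = \<bar>t - s\<bar>"
    using assms(1) by auto
  define d where "d = (f, s, s < t)"
  have "d \<in> directions E lam (Ed f s)" and "fst d = e"
    unfolding d_def using \<open>e = f\<close> by auto
  moreover have "sdist E lam (Ed e t) (dir_point d \<epsilon>) < sdist E lam (Ed e t) (Ed f s)" if "t \<notin> dir_segment d \<epsilon>"
    using that dist \<open>e = f\<close> \<open>t \<noteq> s\<close> assms(2) sdist_dir_point_same_edge[of E lam f t s "s < t" \<epsilon>]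
    unfolding d_def by (auto split: if_splits)
  ultimately show ?thesis
    by blast
qed

lemma exists_direction_closer:
  assumes "network V E lam" and "w \<in> points V E lam" and "e \<in> E" and "0 < t" and "t < lam e"
    and "Ed e t \<noteq> w" and "0 < \<epsilon>"
  shows "\<exists>d\<in>directions E lam w. (fst d = e \<and> t \<in> dir_segment d \<epsilon>)
           \<or> sdist E lam (Ed e t) (dir_point d \<epsilon>) < sdist E lam (Ed e t) w"
proof (cases w)
  case (Vx u)
  with assms show ?thesis
    unfolding Vx by (intro vertex_direction_closer) (auto simp: points_def)
next
  case (Ed f s)
  with assms(6,7) show ?thesis
    using edge_direction_closer[of e t f s \<epsilon> E lam] by simp
qed

lemma finite_directions: "finite E \<Longrightarrow> finite (directions E lam w)"
  by (cases w) simp_all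

lemma exists_small_free_step:
  assumes "finite D" and "\<And>d. d \<in> D \<Longrightarrow> 0 < dir_room lam d" and "0 < e\<^sub>0" and "finite A"
  obtains \<epsilon> where "0 < \<epsilon>" and "\<epsilon> < e\<^sub>0" and "\<And>d. d \<in> D \<Longrightarrow> \<epsilon> < dir_room lam d"
    and "\<And>d. d \<in> D \<Longrightarrow> dir_point d \<epsilon> \<notin> A"
proof -
  define L where "L = Min (insert e\<^sub>0 (dir_room lam ` D))"
  have "0 < L"
    unfolding L_def using assms(1-3) by (subst Min_gr_iff) auto
  let ?bad = "\<Union>d\<in>D. \<Union>z\<in>A. {\<epsilon>. dir_point d \<epsilon> = z}"
  have "finite ?bad"
    using assms(1,4) by (simp add: finite_dir_point_eq)
  moreover have "infinite {0<..<L}"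
    using \<open>0 < L\<close> by simp
  ultimately have "infinite ({0<..<L} - ?bad)"
    by (rule Diff_infinite_finite)
  then have "{0<..<L} - ?bad \<noteq> {}"
    by (metis finite.emptyI)
  then obtain \<epsilon> where \<epsilon>: "\<epsilon> \<in> {0<..<L}" "\<epsilon> \<notin> ?bad"
    by blast
  have "L \<le> e\<^sub>0" and L_le: "\<And>d. d \<in> D \<Longrightarrow> L \<le> dir_room lam d"
    unfolding L_def using assms(1) by auto
  show ?thesis
  proof (rule that)
    show "0 < \<epsilon>" and "\<epsilon> < e\<^sub>0"
      using \<epsilon>(1) \<open>L \<le> e\<^sub>0\<close> by auto
    fix d assume "d \<in> D"
    then show "\<epsilon> < dir_room lam d" and "dir_point d \<epsilon> \<notin> A"
      using \<epsilon> L_le[of d] by auto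
  qed
qed

lemma deviations_cover_closest:
  assumes net: "network V E lam" and "w \<in> points V E lam" and "i < n" and "0 < \<epsilon>"
    and free: "\<And>d. d \<in> directions E lam w \<Longrightarrow> dir_point d \<epsilon> \<notin> x ` {..<n}" and "e \<in> E"
  shows "\<exists>Z. finite Z \<and> (\<forall>t\<in>{0..lam e} - Z. closest_occupied E lam n x w (edge_pt lam e t) \<longrightarrow>
           1 \<le> (\<Sum>d\<in>directions E lam w. share E lam n (x(i := dir_point d \<epsilon>)) i (edge_pt lam e t)
                   + (if e = fst d \<and> t \<in> dir_segment d \<epsilon> then 1 else 0)))"
proof (intro exI conjI ballI impI)
  show "finite ({0, lam e} \<union> Ed e -` {w})"
    by (simp add: finite_vimageI inj_on_def)
  fix t assume t: "t \<in> {0..lam e} - ({0, lam e} \<union> Ed e -` {w})"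
    and closest: "closest_occupied E lam n x w (edge_pt lam e t)"
  let ?g = "\<lambda>d. share E lam n (x(i := dir_point d \<epsilon>)) i (Ed e t) + (if e = fst d \<and> t \<in> dir_segment d \<epsilon> then 1 else 0)"
  have y: "edge_pt lam e t = Ed e t"
    using t by (auto simp: edge_pt_def)
  obtain d where d: "d \<in> directions E lam w"
    and "(fst d = e \<and> t \<in> dir_segment d \<epsilon>) \<or> sdist E lam (Ed e t) (dir_point d \<epsilon>) < sdist E lam (Ed e t) w"
    using exists_direction_closer[OF net assms(2,6) _ _ _ \<open>0 < \<epsilon>\<close>, of t] t by auto
  then have "1 \<le> ?g d"
    using share_nonneg[of E lam n "x(i := dir_point d \<epsilon>)" i "Ed e t"]
      share_deviation_eq_1[OF assms(3) free[OF d] closest[unfolded y]] by auto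
  also have "\<dots> \<le> (\<Sum>d\<in>directions E lam w. ?g d)"
    using d finite_directions[OF network_facts(2)[OF net]]
    by (intro member_le_sum) (auto intro: add_nonneg_nonneg share_nonneg)
  finally show "1 \<le> (\<Sum>d\<in>directions E lam w. share E lam n (x(i := dir_point d \<epsilon>)) i (edge_pt lam e t)
                   + (if e = fst d \<and> t \<in> dir_segment d \<epsilon> then 1 else 0))"
    unfolding y .
qed

lemma payoff_le_of_directions_balanced:
  fixes x :: "nat \<Rightarrow> 'v pt"
  assumes net: "network V E lam" and nash: "nash_eq V E lam n x" and "i < n" and "j < n"
    and bal: "card (directions E lam (x j)) = card {k. k < n \<and> x k = x j}"
  shows "payoff E lam n x j \<le> payoff E lam n x i"
proof (rule field_le_epsilon)
  fix e\<^sub>0 :: real assume "0 < e\<^sub>0"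
  let ?D = "directions E lam (x j)"
  note nf = network_facts[OF net]
  have xj: "x j \<in> points V E lam"
    using nash \<open>j < n\<close> unfolding nash_eq_def is_profile_def by blast
  have finD: "finite ?D"
    using finite_directions[OF nf(2)] .
  obtain \<epsilon> where "0 < \<epsilon>" and "\<epsilon> < e\<^sub>0" and room: "\<And>d. d \<in> ?D \<Longrightarrow> \<epsilon> < dir_room lam d"
    and free: "\<And>d. d \<in> ?D \<Longrightarrow> dir_point d \<epsilon> \<notin> x ` {..<n}"
    using exists_small_free_step[OF finD directions_dir_room(2)[OF net xj] \<open>0 < e\<^sub>0\<close>, of "x ` {..<n}"]
    by (metis finite_imageI finite_lessThan)
  define h where "h d e = (\<lambda>t. if e = fst d \<and> t \<in> dir_segment d \<epsilon> then 1 else 0 :: real)"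
    for d :: "('v \<times> 'v) \<times> real \<times> bool" and e
  note slack = dir_segment_indicator[OF net xj _ \<open>0 < \<epsilon>\<close> room, folded h_def]
  have dev: "payoff E lam n (x(i := dir_point d \<epsilon>)) i \<le> payoff E lam n x i" if "d \<in> ?D" for d
    using nash \<open>i < n\<close> dir_point_mem_points[OF net xj that \<open>0 < \<epsilon>\<close> room[OF that]]
    unfolding nash_eq_def by blast
  have "card ?D * payoff E lam n x j
        \<le> (\<Sum>d\<in>?D. payoff E lam n (x(i := dir_point d \<epsilon>)) i + (\<Sum>e\<in>E. integral {0..lam e} (h d e)))"
    unfolding bal
    using nf(2) \<open>j < n\<close> \<open>i < n\<close> finD slack(1)
      deviations_cover_closest[OF net xj \<open>i < n\<close> \<open>0 < \<epsilon>\<close> free, folded h_def]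
    by (intro payoff_le_mean_deviation) (auto simp: h_def)
  also have "\<dots> \<le> (\<Sum>d\<in>?D. payoff E lam n x i + \<epsilon>)"
    using dev slack(2) by (intro sum_mono) fastforce
  also have "\<dots> = card ?D * (payoff E lam n x i + \<epsilon>)"
    by simp
  finally have "card ?D * payoff E lam n x j \<le> card ?D * (payoff E lam n x i + \<epsilon>)" .
  moreover have "0 < card ?D"
    unfolding bal using \<open>j < n\<close> by (auto simp: card_gt_0_iff)
  ultimately show "payoff E lam n x j \<le> payoff E lam n x i + e\<^sub>0"
    using \<open>\<epsilon> < e\<^sub>0\<close> by (simp add: mult_le_cancel_left_pos)
qed

theorem mainTheorem8:
  fixes V :: "'v set" and E :: "('v \<times> 'v) set" and lam :: "'v \<times> 'v \<Rightarrow> real"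
    and n :: nat and x :: "nat \<Rightarrow> 'v pt"
  assumes "network V E lam"
    and "n \<ge> 2"
    and "nash_eq V E lam n x"
  shows "\<forall>i j. balanced E n x i \<and> balanced E n x j \<longrightarrow> payoff E lam n x i = payoff E lam n x j"
proof (intro allI impI)
  fix i j assume "balanced E n x i \<and> balanced E n x j"
  then have "i < n" "j < n"
    and bal_i: "card (directions E lam (x i)) = card {k. k < n \<and> x k = x i}"
    and bal_j: "card (directions E lam (x j)) = card {k. k < n \<and> x k = x j}"
    unfolding balanced_def card_directions[OF assms(1)] by auto
  have "payoff E lam n x i \<le> payoff E lam n x j"
    using payoff_le_of_directions_balanced[OF assms(1,3) \<open>j < n\<close> \<open>i < n\<close> bal_i] .
  moreover have "payoff E lam n x j \<le> payoff E lam n x i"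
    using payoff_le_of_directions_balanced[OF assms(1,3) \<open>i < n\<close> \<open>j < n\<close> bal_j] .
  ultimately show "payoff E lam n x i = payoff E lam n x j"
    by (rule order.antisym)
qed

end
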